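(* Let $G = (V,E)$ be an $n$-vertex graph. Then there exists a set $A \subseteq V$ such that $G[A]$ is $\frac{n}{5\alpha(G)}$-connected.
   Context: $\alpha(G)$ denotes the independence number of $G$. A graph is $k$-connected if it has more than $k$ vertices and remains connected after deleting any fewer than $k$ vertices. *)

theory Defs
  imports Complex_Main
begin

definition simple_graph :: "'a set \<Rightarrow> ('a \<Rightarrow> 'a \<Rightarrow> bool) \<Rightarrow> bool" where
  "simple_graph V E \<longleftrightarrow> finite V \<and>
     (\<forall>u v. E u v \<longrightarrow> u \<in> V \<and> v \<in> V \<and> u \<noteq> v \<and> E v u)"

definition independent_set :: "'a set \<Rightarrow> ('a \<Rightarrow> 'a \<Rightarrow> bool) \<Rightarrow> 'a set \<Rightarrow> bool" where
  "independent_set V E S \<longleftrightarrow> S \<subseteq> V \<and> (\<forall>u\<in>S. \<forall>v\<in>S. \<not> E u v)"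

definition independence_number :: "'a set \<Rightarrow> ('a \<Rightarrow> 'a \<Rightarrow> bool) \<Rightarrow> nat" where
  "independence_number V E = Max {card S | S. independent_set V E S}"

definition induced_connected :: "('a \<Rightarrow> 'a \<Rightarrow> bool) \<Rightarrow> 'a set \<Rightarrow> bool" where
  "induced_connected E S \<longleftrightarrow>
     (\<forall>u\<in>S. \<forall>v\<in>S. (\<lambda>x y. x \<in> S \<and> y \<in> S \<and> E x y)\<^sup>*\<^sup>* u v)"

definition induced_k_connected :: "('a \<Rightarrow> 'a \<Rightarrow> bool) \<Rightarrow> 'a set \<Rightarrow> real \<Rightarrow> bool" where
  "induced_k_connected E A k \<longleftrightarrow> real (card A) > k \<and>
     (\<forall>X. X \<subseteq> A \<longrightarrow> real (card X) < k \<longrightarrow> induced_connected E (A - X))"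

end

theory Submission
  imports Defs
begin

text \<open>Fix \<open>k > 0\<close> and call \<open>|S| - 2k\<alpha>(G[S])\<close> the potential of a vertex set \<open>S\<close>.
  The whole vertex set has potential above \<open>-k\<close> when \<open>k \<le> n/(2\<alpha>(G))\<close>; take a minimal
  nonempty \<open>S\<close> with this property. Every nonempty \<open>T \<subset> S\<close> has potential at most \<open>-k\<close>,
  and \<open>\<alpha>(G[S]) \<ge> 1\<close> gives \<open>|S| > k\<close>. If deleting a set \<open>X\<close> of fewer than \<open>k\<close> vertices
  splits \<open>G[S]\<close> into non-adjacent parts \<open>C\<close> and \<open>D\<close>, then \<open>\<alpha>(C) + \<alpha>(D) \<le> \<alpha>(S)\<close>, so the
  potential of \<open>S\<close> is at most that of \<open>C\<close> plus that of \<open>D\<close> plus \<open>|X|\<close>, i.e. below \<open>-k\<close>.\<close>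

lemma independent_set_cards_finite_nonempty:
  assumes "finite S"
  shows "finite {card I | I. independent_set S E I}"
    and "{card I | I. independent_set S E I} \<noteq> {}"
proof -
  have "{card I | I. independent_set S E I} \<subseteq> {..card S}"
    using assms by (auto simp: independent_set_def intro: card_mono)
  then show "finite {card I | I. independent_set S E I}"
    using finite_subset by blast
  have "independent_set S E {}" by (simp add: independent_set_def)
  then show "{card I | I. independent_set S E I} \<noteq> {}" by blast
qed

lemma maximum_independent_set_exists:
  assumes "finite S"
  obtains I where "independent_set S E I" "card I = independence_number S E"
proof -
  have "independence_number S E \<in> {card I | I. independent_set S E I}"
    unfolding independence_number_def
    using independent_set_cards_finite_nonempty[OF assms] by (rule Max_in)
  then show ?thesis using that by auto
qed

lemma card_le_independence_number:
  assumes "finite S" "independent_set S E I"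
  shows "card I \<le> independence_number S E"
  unfolding independence_number_def
  using independent_set_cards_finite_nonempty[OF assms(1)] assms(2) by (intro Max_ge) auto

lemma independence_number_mono:
  assumes "finite S" "T \<subseteq> S"
  shows "independence_number T E \<le> independence_number S E"
proof -
  obtain I where "independent_set T E I" "card I = independence_number T E"
    using maximum_independent_set_exists assms finite_subset by metis
  moreover from this have "independent_set S E I"
    using assms(2) by (auto simp: independent_set_def)
  ultimately show ?thesis using card_le_independence_number[OF assms(1)] by metis
qed

lemma independence_number_ge_1:
  assumes "simple_graph V E" "S \<subseteq> V" "S \<noteq> {}"
  shows "1 \<le> independence_number S E"
proof -
  obtain x where x: "x \<in> S" using assms(3) by blast
  have "finite S" using assms(1,2) finite_subset unfolding simple_graph_def by blast
  moreover have "independent_set S E {x}"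
    using assms(1) x unfolding simple_graph_def independent_set_def by auto
  ultimately show ?thesis using card_le_independence_number by fastforce
qed

lemma independence_number_Un_nonadjacent:
  assumes "finite C" "finite D" "C \<inter> D = {}"
    and nonadjacent: "\<forall>x\<in>C. \<forall>y\<in>D. \<not> E x y \<and> \<not> E y x"
  shows "independence_number C E + independence_number D E \<le> independence_number (C \<union> D) E"
proof -
  obtain I where I: "independent_set C E I" "card I = independence_number C E"
    using maximum_independent_set_exists[OF assms(1)] by blast
  obtain J where J: "independent_set D E J" "card J = independence_number D E"
    using maximum_independent_set_exists[OF assms(2)] by blast
  have IJ: "I \<subseteq> C" "J \<subseteq> D" using I J by (auto simp: independent_set_def)
  have "independent_set (C \<union> D) E (I \<union> J)"
    using I(1) J(1) IJ nonadjacent unfolding independent_set_def by blast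
  then have "card (I \<union> J) \<le> independence_number (C \<union> D) E"
    using assms(1,2) by (intro card_le_independence_number) auto
  moreover have "card (I \<union> J) = card I + card J"
    using IJ assms finite_subset by (intro card_Un_disjoint) blast+
  ultimately show ?thesis using I J by simp
qed

lemma not_induced_connected_split:
  assumes sym: "\<And>x y. E x y \<Longrightarrow> E y x" and "\<not> induced_connected E S"
  obtains C D where "S = C \<union> D" "C \<inter> D = {}" "C \<noteq> {}" "D \<noteq> {}"
    "\<forall>x\<in>C. \<forall>y\<in>D. \<not> E x y \<and> \<not> E y x"
proof -
  define R where "R = (\<lambda>x y. x \<in> S \<and> y \<in> S \<and> E x y)"
  obtain u v where u: "u \<in> S" and v: "v \<in> S" and "\<not> R\<^sup>*\<^sup>* u v"
    using assms(2) unfolding induced_connected_def R_def by blast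
  define C where "C = {w \<in> S. R\<^sup>*\<^sup>* u w}"
  have "\<not> E x y" if "x \<in> C" "y \<in> S - C" for x y
  proof
    assume "E x y"
    with that have "R\<^sup>*\<^sup>* u y"
      unfolding C_def R_def by (auto intro: rtranclp.rtrancl_into_rtrancl)
    with that show False unfolding C_def by blast
  qed
  then have "\<forall>x\<in>C. \<forall>y\<in>S - C. \<not> E x y \<and> \<not> E y x"
    using sym by blast
  moreover have "u \<in> C" "v \<in> S - C" using u v \<open>\<not> R\<^sup>*\<^sup>* u v\<close> by (auto simp: C_def)
  ultimately show ?thesis using that[of C "S - C"] unfolding C_def by blast
qed

lemma exists_minimal_subset:
  assumes "finite V" "P V"
  obtains S where "S \<subseteq> V" "P S" "\<And>T. T \<subset> S \<Longrightarrow> \<not> P T"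
proof -
  obtain S where S: "S \<subseteq> V" "P S"
    and least: "\<And>T. T \<subseteq> V \<and> P T \<Longrightarrow> card S \<le> card T"
    using ex_has_least_nat[of "\<lambda>S. S \<subseteq> V \<and> P S" V card] assms(2) by blast
  have "\<not> P T" if "T \<subset> S" for T
  proof
    assume "P T"
    with least that S(1) have "card S \<le> card T" by blast
    moreover have "card T < card S"
      using finite_subset[OF S(1) assms(1)] that by (rule psubset_card_mono)
    ultimately show False by simp
  qed
  with S that show ?thesis by blast
qed

definition potential :: "('a \<Rightarrow> 'a \<Rightarrow> bool) \<Rightarrow> real \<Rightarrow> 'a set \<Rightarrow> real" where
  "potential E k S = real (card S) - 2 * k * real (independence_number S E)"

lemma minimal_potential_set_k_connected:
  assumes G: "simple_graph V E" and "k > 0" and SV: "S \<subseteq> V" and "S \<noteq> {}"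
    and high: "potential E k S > - k"
    and minimal: "\<And>T. T \<subset> S \<Longrightarrow> T \<noteq> {} \<Longrightarrow> potential E k T \<le> - k"
  shows "induced_k_connected E S k"
proof -
  have finS: "finite S" using G SV finite_subset unfolding simple_graph_def by blast
  have "2 * k \<le> 2 * k * real (independence_number S E)"
    using independence_number_ge_1[OF G SV \<open>S \<noteq> {}\<close>] \<open>k > 0\<close> by simp
  then have "real (card S) > k"
    using high unfolding potential_def by linarith
  moreover have "induced_connected E (S - X)" if XS: "X \<subseteq> S" and Xk: "real (card X) < k" for X
  proof (rule ccontr)
    assume disconnected: "\<not> induced_connected E (S - X)"
    have sym: "\<And>x y. E x y \<Longrightarrow> E y x" using G unfolding simple_graph_def by blast
    obtain C D where CD: "S - X = C \<union> D" "C \<inter> D = {}" "C \<noteq> {}" "D \<noteq> {}"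
      and nonadjacent: "\<forall>x\<in>C. \<forall>y\<in>D. \<not> E x y \<and> \<not> E y x"
      by (rule not_induced_connected_split[OF sym disconnected])
    have finCDX: "finite C" "finite D" "finite X"
      using CD(1) XS finS by (auto intro: finite_subset)
    have low: "potential E k C \<le> - k" "potential E k D \<le> - k"
      using CD XS by (auto intro!: minimal)
    have "independence_number C E + independence_number D E \<le> independence_number S E"
      using independence_number_Un_nonadjacent[OF finCDX(1,2) CD(2) nonadjacent]
        independence_number_mono[OF finS, of "C \<union> D" E] CD(1) by force
    then have \<alpha>: "real (independence_number C E) + real (independence_number D E)
        \<le> real (independence_number S E)"
      by linarith
    have "card S = card (S - X) + card X"
      using finS XS finCDX(3) by (simp add: card_Diff_subset card_mono)
    moreover have "card (S - X) = card C + card D"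
      using finCDX CD(1,2) by (simp add: card_Un_disjoint)
    ultimately have "card S = card C + card D + card X" by simp
    then have "potential E k S \<le> potential E k C + potential E k D + real (card X)"
      using mult_left_mono[OF \<alpha>, of "2 * k"] \<open>k > 0\<close>
      unfolding potential_def by (simp add: algebra_simps)
    then show False using low high Xk by linarith
  qed
  ultimately show ?thesis unfolding induced_k_connected_def by blast
qed

lemma exists_induced_k_connected:
  assumes G: "simple_graph V E" and "V \<noteq> {}" and "k > 0"
    and "potential E k V > - k"
  shows "\<exists>A \<subseteq> V. induced_k_connected E A k"
proof -
  have "finite V" using G unfolding simple_graph_def by blast
  then obtain S where "S \<subseteq> V" "S \<noteq> {} \<and> potential E k S > - k"
    and "\<And>T. T \<subset> S \<Longrightarrow> \<not> (T \<noteq> {} \<and> potential E k T > - k)"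
    using exists_minimal_subset[of V "\<lambda>S. S \<noteq> {} \<and> potential E k S > - k"] assms by blast
  then show ?thesis
    using minimal_potential_set_k_connected[OF G \<open>k > 0\<close>] by (meson not_less)
qed

theorem mainTheorem5:
  fixes V :: "'a set" and E :: "'a \<Rightarrow> 'a \<Rightarrow> bool" and n :: nat
  assumes "simple_graph V E" and "card V = n" and "V \<noteq> {}"
  shows "\<exists>A \<subseteq> V. induced_k_connected E A
           (real n / (5 * real (independence_number V E)))"
proof -
  define \<alpha> where "\<alpha> = real (independence_number V E)"
  define k where "k = real n / (5 * \<alpha>)"
  have "\<alpha> \<ge> 1"
    using independence_number_ge_1[OF assms(1) order_refl assms(3)] by (simp add: \<alpha>_def)
  moreover have "n > 0"
    using assms card_gt_0_iff unfolding simple_graph_def by blast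
  ultimately have "k > 0" and "2 * k * \<alpha> = 2 * real n / 5"
    by (simp_all add: k_def)
  then have "potential E k V > - k"
    using assms(2) \<open>n > 0\<close> by (simp add: potential_def \<alpha>_def)
  then show ?thesis
    using exists_induced_k_connected[OF assms(1,3) \<open>k > 0\<close>] by (simp add: k_def \<alpha>_def)
qed

end
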